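(* Let $E=(E_-,\infty)$ with $E_-\in\{-\infty\}\cup\mathbb R$. Let $u,\tilde u:E\to(0,\infty)$ be two global $C^2$ solutions of $$0=\tfrac12b^2u''+\tilde au'+\eta u-u^2-d\frac{(u')^2}{u}$$ such that $\tilde u(y)/u(y)\to1$ as $y\to\partial E$ (i.e. as $y\downarrow E_-$ and as $y\to\infty$). Then $u=\tilde u$.
   Context: $r,\lambda,\sigma,a,b,\rho,\delta:E\to\mathbb R$ are locally Lipschitz with $\sigma>0$, $b(y)\neq0$, $\rho(y)\in[-1,1]$; $R\in(0,\infty)\setminus\{1\}$. Define $\eta=\frac1R\big(\delta-(1-R)(r+\frac{\lambda^2}{2R})\big)$, $\tilde a=a+\frac{1-R}{R}\rho\lambda b$, $d=\frac12b^2((1-\rho^2)R+\rho^2+1)$. *)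

theory Defs
  imports "HOL-Analysis.Analysis"
begin

definition state_space :: "ereal \<Rightarrow> real set" where
  "state_space Em = {y. Em < ereal y}"

definition lower_bdry_filter :: "ereal \<Rightarrow> real filter" where
  "lower_bdry_filter Em = (if Em = -\<infinity> then at_bot else at_right (real_of_ereal Em))"

definition locally_lipschitz_on :: "real set \<Rightarrow> (real \<Rightarrow> real) \<Rightarrow> bool" where
  "locally_lipschitz_on E f \<longleftrightarrow>
     (\<forall>x\<in>E. \<exists>e>0. \<exists>C. C-lipschitz_on (cball x e \<inter> E) f)"

definition C2_on :: "real set \<Rightarrow> (real \<Rightarrow> real) \<Rightarrow> bool" where
  "C2_on E u \<longleftrightarrow>
     (\<forall>y\<in>E. u differentiable (at y) \<and> deriv u differentiable (at y))
     \<and> continuous_on E (deriv (deriv u))"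

definition eta_coef ::
  "real \<Rightarrow> (real \<Rightarrow> real) \<Rightarrow> (real \<Rightarrow> real) \<Rightarrow> (real \<Rightarrow> real) \<Rightarrow> real \<Rightarrow> real" where
  "eta_coef R r lam del y =
     (1 / R) * (del y - (1 - R) * (r y + (lam y)^2 / (2 * R)))"

definition atilde_coef ::
  "real \<Rightarrow> (real \<Rightarrow> real) \<Rightarrow> (real \<Rightarrow> real) \<Rightarrow> (real \<Rightarrow> real) \<Rightarrow> (real \<Rightarrow> real) \<Rightarrow> real \<Rightarrow> real" where
  "atilde_coef R a rho lam b y = a y + (1 - R) / R * rho y * lam y * b y"

definition d_coef :: "real \<Rightarrow> (real \<Rightarrow> real) \<Rightarrow> (real \<Rightarrow> real) \<Rightarrow> real \<Rightarrow> real" where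
  "d_coef R b rho y = (1/2) * (b y)^2 * ((1 - (rho y)^2) * R + (rho y)^2 + 1)"

definition is_global_solution ::
  "real set \<Rightarrow> (real \<Rightarrow> real) \<Rightarrow> (real \<Rightarrow> real) \<Rightarrow> (real \<Rightarrow> real) \<Rightarrow> (real \<Rightarrow> real)
     \<Rightarrow> (real \<Rightarrow> real) \<Rightarrow> bool" where
  "is_global_solution E b atl eta d u \<longleftrightarrow>
     C2_on E u \<and>
     (\<forall>y\<in>E. 0 = (1/2) * (b y)^2 * deriv (deriv u) y + atl y * deriv u y + eta y * u y
                 - (u y)^2 - d y * (deriv u y)^2 / u y)"

end

theory Submission
  imports Defs
begin

text \<open>Comparison principle. If \<open>ut/u\<close> exceeded 1 somewhere, then, since it tends to 1 at
  both ends of \<open>E\<close>, it would attain a maximum \<open>c > 1\<close> at some \<open>z \<in> E\<close>. There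
  \<open>ut - c u\<close> has an interior maximum 0, so \<open>ut' = c u'\<close> and \<open>ut'' \<le> c u''\<close>.
  Every term of the equation except \<open>-u\<^sup>2\<close> is positively homogeneous of degree one in
  \<open>(u, u', u'')\<close>, so subtracting \<open>c\<close> times the equation for \<open>u\<close> from the one for \<open>ut\<close> at \<open>z\<close>
  leaves \<open>0 = (1/2) b\<^sup>2 (ut'' - c u'') + c (1 - c) u\<^sup>2 < 0\<close>. Hence \<open>ut \<le> u\<close>, and by symmetry
  \<open>u \<le> ut\<close>. Only the form of the equation enters.\<close>

lemma open_state_space: "open (state_space Em)"
  unfolding state_space_def
  by (intro open_Collect_less continuous_on_const continuous_on_ereal continuous_on_id)

lemma state_space_upward_closed:
  assumes "p \<in> state_space Em" "p \<le> y"
  shows "y \<in> state_space Em"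
  using assms by (auto simp: state_space_def intro: order_less_le_trans)

lemma eventually_lower_bdry_filter_bound:
  assumes ev: "eventually P (lower_bdry_filter Em)" and y0: "y0 \<in> state_space Em"
  obtains p where "p \<in> state_space Em" "p \<le> y0" "\<And>y. y \<in> state_space Em \<Longrightarrow> y < p \<Longrightarrow> P y"
proof (cases Em)
  case (real e)
  have "eventually P (at_right e)" using ev real by (simp add: lower_bdry_filter_def)
  then obtain p where p: "p > e" "\<And>y. e < y \<Longrightarrow> y < p \<Longrightarrow> P y"
    unfolding eventually_at_right_field by blast
  have "e < y0" using y0 real by (simp add: state_space_def)
  then show ?thesis
    using p real by (intro that[of "min ((e + p) / 2) y0"]) (auto simp: state_space_def)
next
  case MInf
  have "eventually P at_bot" using ev MInf by (simp add: lower_bdry_filter_def)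
  then obtain N where "\<And>y. y \<le> N \<Longrightarrow> P y"
    unfolding eventually_at_bot_linorder by blast
  then show ?thesis
    using MInf by (intro that[of "min N y0"]) (auto simp: state_space_def)
next
  case PInf
  then show ?thesis using y0 by (simp add: state_space_def)
qed

lemma state_space_attains_max:
  fixes w :: "real \<Rightarrow> real"
  assumes cont: "continuous_on (state_space Em) w"
    and lower: "(w \<longlongrightarrow> l) (lower_bdry_filter Em)" and upper: "(w \<longlongrightarrow> l) at_top"
    and y0: "y0 \<in> state_space Em" "w y0 > l"
  obtains z where "z \<in> state_space Em" "\<And>y. y \<in> state_space Em \<Longrightarrow> w y \<le> w z"
proof -
  obtain p where p: "p \<in> state_space Em" "p \<le> y0"
      "\<And>y. y \<in> state_space Em \<Longrightarrow> y < p \<Longrightarrow> w y < w y0"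
    using eventually_lower_bdry_filter_bound[OF order_tendstoD(2)[OF lower y0(2)] y0(1)] by blast
  obtain N where N: "\<And>y. y \<ge> N \<Longrightarrow> w y < w y0"
    using order_tendstoD(2)[OF upper y0(2)] unfolding eventually_at_top_linorder by blast
  define q where "q = max N y0"
  have pq: "{p..q} \<subseteq> state_space Em"
    using p(1) state_space_upward_closed by auto
  obtain z where z: "z \<in> {p..q}" "\<And>y. y \<in> {p..q} \<Longrightarrow> w y \<le> w z"
    using continuous_attains_sup[of "{p..q}" w] continuous_on_subset[OF cont pq] p(2)
    by (force simp: q_def)
  have "w y0 \<le> w z" using z(2) p(2) by (simp add: q_def)
  moreover have "w y < w y0" if "y \<in> state_space Em" "y \<notin> {p..q}" for y
    using that p(3) N by (force simp: q_def)
  ultimately show ?thesis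
    using that[of z] z pq by force
qed

lemma DERIV_local_max_second:
  fixes g g' :: "real \<Rightarrow> real"
  assumes S: "open S" "y0 \<in> S" and max: "\<And>y. y \<in> S \<Longrightarrow> g y \<le> g y0"
    and g: "\<And>y. y \<in> S \<Longrightarrow> (g has_real_derivative g' y) (at y)"
    and g': "(g' has_real_derivative L) (at y0)"
  shows "g' y0 = 0" "L \<le> 0"
proof -
  obtain e where e: "e > 0" "ball y0 e \<subseteq> S" using S openE by blast
  show g'0: "g' y0 = 0"
    using e max by (intro DERIV_local_max[OF g[OF S(2)] e(1)]) (auto simp: dist_real_def subset_iff)
  show "L \<le> 0"
  proof (rule ccontr)
    assume "\<not> L \<le> 0"
    moreover have "((\<lambda>y. (g' y - g' y0) / (y - y0)) \<longlongrightarrow> L) (at y0)"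
      using g' has_field_derivative_iff by blast
    ultimately have "eventually (\<lambda>y. (g' y - g' y0) / (y - y0) > 0) (at y0)"
      using order_tendstoD(1) by force
    then obtain d where d: "d > 0" "\<And>y. y \<noteq> y0 \<Longrightarrow> dist y y0 < d \<Longrightarrow> (g' y - g' y0) / (y - y0) > 0"
      unfolding eventually_at by blast
    define y1 where "y1 = y0 + min d e / 2"
    have inS: "y \<in> S" if "y0 \<le> y" "y \<le> y1" for y
      using that e by (auto simp: y1_def dist_real_def subset_iff)
    obtain z where z: "y0 < z" "z < y1" "g y1 - g y0 = (y1 - y0) * g' z"
      using MVT2[of y0 y1 g g'] inS g d(1) e(1) by (auto simp: y1_def)
    txt \<open>\<open>g'\<close> vanishes at \<open>y0\<close> and increases through it, so \<open>g\<close> increases just right of \<open>y0\<close>.\<close>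
    have "g' z > 0"
      using d(2)[of z] z g'0 by (auto simp: y1_def dist_real_def zero_less_divide_iff)
    then have "(y1 - y0) * g' z > 0" using z(1,2) by simp
    then have "g y1 > g y0" using z(3) by simp
    moreover have "g y1 \<le> g y0" using max inS[of y1] d(1) e(1) by (simp add: y1_def)
    ultimately show False by simp
  qed
qed

lemma C2_on_DERIV:
  assumes "C2_on E u" "y \<in> E"
  shows "(u has_real_derivative deriv u y) (at y)"
    and "(deriv u has_real_derivative deriv (deriv u) y) (at y)"
  using assms by (simp_all add: C2_on_def DERIV_deriv_iff_real_differentiable)

lemma equation_difference_at_touching_point:
  fixes B A H D U U' U'' T'' c :: real
  assumes "U > 0" "c > 0"
    and eq_u: "0 = B * U'' + A * U' + H * U - U\<^sup>2 - D * U'\<^sup>2 / U"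
    and eq_ut: "0 = B * T'' + A * (c * U') + H * (c * U) - (c * U)\<^sup>2 - D * (c * U')\<^sup>2 / (c * U)"
  shows "B * (T'' - c * U'') = c * (c - 1) * U\<^sup>2"
proof -
  define X where "X = D * U'\<^sup>2 / U"
  have "D * (c * U')\<^sup>2 / (c * U) = c * X"
    using assms(1,2) by (simp add: X_def power2_eq_square field_simps)
  then have eq_ut': "0 = B * T'' + A * (c * U') + H * (c * U) - (c * U)\<^sup>2 - c * X"
    using eq_ut by simp
  have "B * (T'' - c * U'') - c * (c - 1) * U\<^sup>2
      = (B * T'' + A * (c * U') + H * (c * U) - (c * U)\<^sup>2 - c * X)
        - c * (B * U'' + A * U' + H * U - U\<^sup>2 - X)"
    by (simp add: algebra_simps power2_eq_square)
  also have "\<dots> = 0"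
    using eq_u eq_ut' by (simp add: X_def)
  finally show ?thesis by simp
qed

lemma global_solution_touching_scale_le_one:
  fixes b atl eta d u ut :: "real \<Rightarrow> real"
  assumes u_sol: "is_global_solution E b atl eta d u"
    and ut_sol: "is_global_solution E b atl eta d ut"
    and E: "open E" and z: "z \<in> E" and uz: "u z > 0" and c: "c > 0"
    and below: "\<And>x. x \<in> E \<Longrightarrow> ut x \<le> c * u x" and touch: "ut z = c * u z"
  shows "c \<le> 1"
proof (rule ccontr)
  assume "\<not> c \<le> 1"
  have u_C2: "C2_on E u" and ut_C2: "C2_on E ut"
    using u_sol ut_sol by (simp_all add: is_global_solution_def)
  note du = C2_on_DERIV[OF u_C2] and dut = C2_on_DERIV[OF ut_C2]
  have gmax: "ut x - c * u x \<le> ut z - c * u z" if "x \<in> E" for x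
    using below[OF that] touch by simp
  have dg: "((\<lambda>x. ut x - c * u x) has_real_derivative deriv ut x - c * deriv u x) (at x)"
    if "x \<in> E" for x
    using du(1)[OF that] dut(1)[OF that] by (auto intro!: derivative_eq_intros)
  have dg': "((\<lambda>x. deriv ut x - c * deriv u x) has_real_derivative
      deriv (deriv ut) z - c * deriv (deriv u) z) (at z)"
    using du(2)[OF z] dut(2)[OF z] by (auto intro!: derivative_eq_intros)
  have ut'_z: "deriv ut z = c * deriv u z"
    and ut''_z: "deriv (deriv ut) z \<le> c * deriv (deriv u) z"
    using DERIV_local_max_second[OF E z gmax dg dg'] by auto
  have "(1/2) * (b z)\<^sup>2 * (deriv (deriv ut) z - c * deriv (deriv u) z) = c * (c - 1) * (u z)\<^sup>2"
  proof (rule equation_difference_at_touching_point)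
    show "0 = (1/2) * (b z)\<^sup>2 * deriv (deriv u) z + atl z * deriv u z + eta z * u z
        - (u z)\<^sup>2 - d z * (deriv u z)\<^sup>2 / u z"
      using u_sol z by (simp add: is_global_solution_def)
    show "0 = (1/2) * (b z)\<^sup>2 * deriv (deriv ut) z + atl z * (c * deriv u z) + eta z * (c * u z)
        - (c * u z)\<^sup>2 - d z * (c * deriv u z)\<^sup>2 / (c * u z)"
      using ut_sol z by (simp add: is_global_solution_def flip: touch ut'_z)
  qed (use uz c in auto)
  moreover have "(1/2) * (b z)\<^sup>2 * (deriv (deriv ut) z - c * deriv (deriv u) z) \<le> 0"
    using ut''_z by (simp add: mult_nonneg_nonpos)
  moreover have "c * (c - 1) * (u z)\<^sup>2 > 0" using \<open>\<not> c \<le> 1\<close> uz by simp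
  ultimately show False by linarith
qed

lemma global_solution_le_of_ratio_limits:
  fixes b atl eta d u ut :: "real \<Rightarrow> real"
  assumes u_pos: "\<forall>y\<in>state_space Em. u y > 0"
    and u_sol: "is_global_solution (state_space Em) b atl eta d u"
    and ut_sol: "is_global_solution (state_space Em) b atl eta d ut"
    and lower: "((\<lambda>y. ut y / u y) \<longlongrightarrow> 1) (lower_bdry_filter Em)"
    and upper: "((\<lambda>y. ut y / u y) \<longlongrightarrow> 1) at_top"
    and y: "y \<in> state_space Em"
  shows "ut y \<le> u y"
proof (rule ccontr)
  define E where "E = state_space Em"
  define w where "w = (\<lambda>y. ut y / u y)"
  assume "\<not> ut y \<le> u y"
  then have wy: "w y > 1" using y u_pos by (simp add: w_def)
  have "continuous_on E w"
  proof (intro continuous_at_imp_continuous_on ballI)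
    fix x assume "x \<in> E"
    then show "isCont w x"
      using u_pos u_sol ut_sol C2_on_DERIV(1)[of E u x] C2_on_DERIV(1)[of E ut x]
      unfolding w_def by (intro isCont_divide DERIV_isCont) (auto simp: E_def is_global_solution_def)
  qed
  then obtain z where z: "z \<in> E" and wmax: "\<And>y. y \<in> E \<Longrightarrow> w y \<le> w z"
    using state_space_attains_max[of Em w 1 y] lower upper y wy unfolding w_def E_def by blast
  have uz: "u z > 0" using z u_pos by (simp add: E_def)
  have "w z \<le> 1"
  proof (rule global_solution_touching_scale_le_one[OF u_sol[folded E_def] ut_sol[folded E_def]])
    show "ut x \<le> w z * u x" if "x \<in> E" for x
      using wmax[OF that] u_pos that by (simp add: w_def E_def divide_le_eq)
  qed (use z uz wmax[of y] wy y in \<open>auto simp: w_def E_def open_state_space\<close>)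
  then show False using wmax[of y] wy y by (simp add: E_def)
qed

theorem theorem4p7:
  fixes Em :: ereal and R :: real
    and r lam sigma a b rho del u ut :: "real \<Rightarrow> real"
  assumes Em: "Em \<noteq> \<infinity>"
    and lip: "locally_lipschitz_on (state_space Em) r" "locally_lipschitz_on (state_space Em) lam"
      "locally_lipschitz_on (state_space Em) sigma" "locally_lipschitz_on (state_space Em) a"
      "locally_lipschitz_on (state_space Em) b" "locally_lipschitz_on (state_space Em) rho"
      "locally_lipschitz_on (state_space Em) del"
    and sigma_pos: "\<forall>y\<in>state_space Em. sigma y > 0"
    and b_nz: "\<forall>y\<in>state_space Em. b y \<noteq> 0"
    and rho_bd: "\<forall>y\<in>state_space Em. -1 \<le> rho y \<and> rho y \<le> 1"
    and R: "R > 0" "R \<noteq> 1"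
    and u_pos: "\<forall>y\<in>state_space Em. u y > 0"
    and ut_pos: "\<forall>y\<in>state_space Em. ut y > 0"
    and u_sol: "is_global_solution (state_space Em) b (atilde_coef R a rho lam b)
                  (eta_coef R r lam del) (d_coef R b rho) u"
    and ut_sol: "is_global_solution (state_space Em) b (atilde_coef R a rho lam b)
                  (eta_coef R r lam del) (d_coef R b rho) ut"
    and lim_lower: "((\<lambda>y. ut y / u y) \<longlongrightarrow> 1) (lower_bdry_filter Em)"
    and lim_upper: "((\<lambda>y. ut y / u y) \<longlongrightarrow> 1) at_top"
  shows "\<forall>y\<in>state_space Em. u y = ut y"
proof
  fix y assume y: "y \<in> state_space Em"
  have lim_lower': "((\<lambda>y. u y / ut y) \<longlongrightarrow> 1) (lower_bdry_filter Em)"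
    using tendsto_inverse[OF lim_lower] by simp
  have lim_upper': "((\<lambda>y. u y / ut y) \<longlongrightarrow> 1) at_top"
    using tendsto_inverse[OF lim_upper] by simp
  show "u y = ut y"
    using global_solution_le_of_ratio_limits[OF u_pos u_sol ut_sol lim_lower lim_upper y]
      global_solution_le_of_ratio_limits[OF ut_pos ut_sol u_sol lim_lower' lim_upper' y]
    by simp
qed

end
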